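(* Let $\mathcal V$ be a finite set, let $P_h$ and $\pi$ be probability distributions on $\mathcal V$, and set $q := 1-\max_{x\in\mathcal V}P_h(x)$. Then: (i) For every subset $A\subseteq\mathcal V$, $$\pi(A)-P_h(A)\;\le\;\sup\Bigl\{\lambda\in[0,1]:\ d_{\mathrm{kl}}(\lambda\,\|\,q)\le D_{\mathrm{KL}}(\pi\,\|\,P_h)\Bigr\}.$$ (ii) For every fixed $C\ge 0$, $$\lim_{q\to 0}\ \sup_{\pi:\,D_{\mathrm{KL}}(\pi\|P_h)\le C}\ \sup_{A\subseteq\mathcal V}\bigl(\pi(A)-P_h(A)\bigr)=0,$$ in the uniform sense: for every $\varepsilon>0$ there is $\eta>0$ such that for every distribution $P_h$ on $\mathcal V$ with $1-\max_{x}P_h(x)<\eta$, every distribution $\pi$ on $\mathcal V$ with $D_{\mathrm{KL}}(\pi\|P_h)\le C$, and every $A\subseteq\mathcal V$, one has $\pi(A)-P_h(A)\le\varepsilon$.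
   Context: For distributions on a finite set, $\pi(A)=\sum_{x\in A}\pi(x)$ and $D_{\mathrm{KL}}(\pi\|P_h)=\sum_x \pi(x)\log\frac{\pi(x)}{P_h(x)}\in[0,+\infty]$. The binary KL divergence is $d_{\mathrm{kl}}(p\|q):=p\log\frac{p}{q}+(1-p)\log\frac{1-p}{1-q}$ for $p,q\in[0,1]$, with the conventions $0\log(0/q):=0$ for $q\in[0,1]$ (including $0\log(0/0)=0$) and $b\log(b/0):=+\infty$ for $b>0$. (In the paper, $P_h=P_h(\cdot\mid h_t)$ is a human-like next-token distribution given a history $h_t$, $\pi=\pi_\theta(\cdot\mid h_t)$ is a policy's next-token distribution, and $q$ is called the local capacity mass.) *)

theory Defs
  imports "HOL-Analysis.Analysis"
begin

definition is_dist :: "'a set \<Rightarrow> ('a \<Rightarrow> real) \<Rightarrow> bool" where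
  "is_dist V p \<longleftrightarrow> (\<forall>x\<in>V. 0 \<le> p x) \<and> (\<Sum>x\<in>V. p x) = 1"

definition xlogxy :: "real \<Rightarrow> real \<Rightarrow> ereal" where
  "xlogxy b c = (if b = 0 then 0 else if c = 0 then \<infinity> else ereal (b * ln (b / c)))"

definition KL :: "'a set \<Rightarrow> ('a \<Rightarrow> real) \<Rightarrow> ('a \<Rightarrow> real) \<Rightarrow> ereal" where
  "KL V \<pi> P = (\<Sum>x\<in>V. xlogxy (\<pi> x) (P x))"

definition dkl :: "real \<Rightarrow> real \<Rightarrow> ereal" where
  "dkl p q = xlogxy p q + xlogxy (1 - p) (1 - q)"

end

theory Submission
  imports Defs
begin

text \<open>Both parts rest on the data-processing inequality
  d_kl(\<pi>(A) || P(A)) \<le> D_KL(\<pi> || P), a consequence of the log-sum inequality, and on a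
  dichotomy for a mode m of P: if m \<in> A then \<pi>(A) - P(A) \<le> 1 - P(m) = q, otherwise P(A) \<le> q.
  In the second case either \<pi>(A) \<le> q, or \<pi>(A) is itself a feasible \<lambda> because
  d_kl(\<pi>(A) || \<cdot>) decreases on [0, \<pi>(A)]. For the uniform statement,
  d_kl(a || b) \<ge> a ln(1/b) - 1, so a divergence bound C together with
  P(A) \<le> q < exp(-(C + 1)/\<epsilon>) forces \<pi>(A) \<le> \<epsilon>.\<close>

lemma one_minus_inverse_le_ln:
  fixes x :: real
  assumes "0 < x"
  shows "1 - 1 / x \<le> ln x"
  using ln_le_minus_one[of "1 / x"] assms by (simp add: ln_div)

lemma diff_le_mult_ln_div:
  fixes a b :: real
  assumes "0 \<le> a" "0 < b"
  shows "a - b \<le> a * ln (a / b)"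
proof (cases "a = 0")
  case False
  then have "a * (1 - 1 / (a / b)) \<le> a * ln (a / b)"
    using assms by (intro mult_left_mono one_minus_inverse_le_ln) auto
  then show ?thesis using False by (simp add: right_diff_distrib)
qed (use assms in simp)

lemma xlogxy_pos_right: "0 < b \<Longrightarrow> xlogxy a b = ereal (a * ln (a / b))"
  by (simp add: xlogxy_def)

lemma xlogxy_zero_right: "a \<noteq> 0 \<Longrightarrow> xlogxy a 0 = \<infinity>"
  by (simp add: xlogxy_def)

lemma xlogxy_neq_minf: "xlogxy a b \<noteq> -\<infinity>"
  by (simp add: xlogxy_def)

lemma xlogxy_ge_diff:
  assumes "0 \<le> a" "0 \<le> b"
  shows "ereal (a - b) \<le> xlogxy a b"
proof (cases "b = 0")
  case True
  then show ?thesis using assms by (cases "a = 0") (simp_all add: xlogxy_def)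
next
  case False
  then show ?thesis
    using assms diff_le_mult_ln_div[of a b] by (simp add: xlogxy_pos_right)
qed

lemma xlogxy_antimono_right:
  assumes "0 \<le> a" "0 \<le> b" "b \<le> c"
  shows "xlogxy a c \<le> xlogxy a b"
proof (cases "a = 0 \<or> b = 0")
  case True
  then show ?thesis by (auto simp: xlogxy_def)
next
  case False
  then have "a * ln (a / c) \<le> a * ln (a / b)"
    using assms by (simp add: ln_div)
  then show ?thesis
    using False assms by (simp add: xlogxy_pos_right)
qed

text \<open>With A = a1 + a2 and B = b1 + b2 positive, apply a - b \<le> a ln (a / b) to the pairs
  (a_i, b_i A / B) and add.\<close>
lemma xlogxy_add_le:
  assumes "0 \<le> a1" "0 \<le> a2" "0 \<le> b1" "0 \<le> b2"
  shows "xlogxy (a1 + a2) (b1 + b2) \<le> xlogxy a1 b1 + xlogxy a2 b2"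
proof -
  consider "a1 = 0" | "a2 = 0" | "b1 = 0 \<or> b2 = 0" "a1 \<noteq> 0" "a2 \<noteq> 0"
    | "0 < a1" "0 < a2" "0 < b1" "0 < b2"
    using assms by force
  then show ?thesis
  proof cases
    case 1
    then show ?thesis
      using assms xlogxy_antimono_right[of a2 b2 "b1 + b2"] by (simp add: xlogxy_def)
  next
    case 2
    then show ?thesis
      using assms xlogxy_antimono_right[of a1 b1 "b1 + b2"] by (simp add: xlogxy_def)
  next
    case 3
    then show ?thesis
      using xlogxy_neq_minf[of a1 b1] xlogxy_neq_minf[of a2 b2] by (auto simp: xlogxy_def)
  next
    case 4
    define r where "r = (a1 + a2) / (b1 + b2)"
    have r: "0 < r" using 4 by (simp add: r_def)
    have split: "a * ln (a / b) = a * ln (a / (b * r)) + a * ln r" if "0 < a" "0 < b" for a b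
      using that r by (simp add: ln_div ln_mult algebra_simps)
    have "b1 * r + b2 * r = a1 + a2"
      unfolding distrib_right[symmetric] r_def using 4 by simp
    then have "(a1 + a2) * ln r \<le> a1 * ln (a1 / b1) + a2 * ln (a2 / b2)"
      using split[of a1 b1] split[of a2 b2] 4 r
        diff_le_mult_ln_div[of a1 "b1 * r"] diff_le_mult_ln_div[of a2 "b2 * r"]
      by (simp add: distrib_right)
    then show ?thesis
      using 4 by (simp add: xlogxy_pos_right r_def)
  qed
qed

lemma xlogxy_sum_le:
  assumes "finite S" "\<And>x. x \<in> S \<Longrightarrow> 0 \<le> \<pi> x" "\<And>x. x \<in> S \<Longrightarrow> 0 \<le> P x"
  shows "xlogxy (sum \<pi> S) (sum P S) \<le> (\<Sum>x\<in>S. xlogxy (\<pi> x) (P x))"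
  using assms
proof (induction S rule: finite_induct)
  case empty
  then show ?case by (simp add: xlogxy_def)
next
  case (insert x F)
  have "xlogxy (sum \<pi> (insert x F)) (sum P (insert x F))
      = xlogxy (\<pi> x + sum \<pi> F) (P x + sum P F)"
    using insert by simp
  also have "\<dots> \<le> xlogxy (\<pi> x) (P x) + xlogxy (sum \<pi> F) (sum P F)"
    using insert by (intro xlogxy_add_le sum_nonneg) auto
  also have "\<dots> \<le> xlogxy (\<pi> x) (P x) + (\<Sum>x\<in>F. xlogxy (\<pi> x) (P x))"
    using insert by (intro add_left_mono) auto
  also have "\<dots> = (\<Sum>x\<in>insert x F. xlogxy (\<pi> x) (P x))"
    using insert by simp
  finally show ?case .
qed

lemma dkl_self: "dkl q q = 0"
  by (simp add: dkl_def xlogxy_def)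

text \<open>The difference a ln (q / b) + (1 - a) ln ((1 - q) / (1 - b)) is at least
  (q - b) (a / q - (1 - a) / (1 - q)), and a / q \<ge> 1 \<ge> (1 - a) / (1 - q).\<close>
lemma dkl_antimono_right:
  assumes "0 \<le> b" "b \<le> q" "q < a" "a \<le> 1"
  shows "dkl a q \<le> dkl a b"
proof (cases "b = 0")
  case True
  then show ?thesis
    using assms xlogxy_neq_minf[of "1 - a" "1 - b"] by (simp add: dkl_def xlogxy_zero_right)
next
  case False
  then have pos: "0 < b" "0 < q" "0 < 1 - q" "0 < 1 - b" using assms by auto
  have "a * (1 - 1 / (q / b)) \<le> a * ln (q / b)"
    using pos assms by (intro mult_left_mono one_minus_inverse_le_ln) auto
  moreover have "(1 - a) * (1 - 1 / ((1 - q) / (1 - b))) \<le> (1 - a) * ln ((1 - q) / (1 - b))"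
    using pos assms by (intro mult_left_mono one_minus_inverse_le_ln) auto
  moreover have "a * (1 - 1 / (q / b)) + (1 - a) * (1 - 1 / ((1 - q) / (1 - b)))
      = (q - b) * (a / q - (1 - a) / (1 - q))"
    using pos by (simp add: field_simps)
  moreover have "0 \<le> (q - b) * (a / q - (1 - a) / (1 - q))"
  proof (rule mult_nonneg_nonneg)
    have "(1 - a) / (1 - q) \<le> 1" "1 \<le> a / q"
      using pos assms by simp_all
    then show "0 \<le> a / q - (1 - a) / (1 - q)" by linarith
  qed (use assms in simp)
  ultimately have gap: "0 \<le> a * ln (q / b) + (1 - a) * ln ((1 - q) / (1 - b))"
    by linarith
  have chain: "x * ln (x / z) = x * ln (x / y) + x * ln (y / z)"
    if "0 \<le> x" "0 < y" "0 < z" for x y z :: real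
    using that by (cases "x = 0") (simp_all add: ln_div algebra_simps)
  show ?thesis
    using gap chain[of a q b] chain[of "1 - a" "1 - q" "1 - b"] pos assms
    by (simp add: dkl_def xlogxy_pos_right)
qed

lemma dkl_ge_mult_ln_inverse:
  assumes "0 \<le> a" "a \<le> 1" "0 < b" "b \<le> 1"
  shows "ereal (a * ln (1 / b) - 1) \<le> dkl a b"
proof -
  have "a - 1 \<le> a * ln a"
    using diff_le_mult_ln_div[of a 1] assms by simp
  then have "ereal (a * ln (1 / b) + a - 1) \<le> xlogxy a b"
    using assms by (simp add: xlogxy_pos_right ln_div algebra_simps)
  moreover have "ereal (b - a) \<le> xlogxy (1 - a) (1 - b)"
    using xlogxy_ge_diff[of "1 - a" "1 - b"] assms by simp
  ultimately have "ereal ((a * ln (1 / b) + a - 1) + (b - a)) \<le> dkl a b"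
    unfolding dkl_def plus_ereal.simps(1)[symmetric] by (rule add_mono)
  then show ?thesis
    by (rule order_trans[rotated]) (use assms in simp)
qed

lemma is_dist_sum_nonneg: "is_dist V P \<Longrightarrow> A \<subseteq> V \<Longrightarrow> 0 \<le> sum P A"
  unfolding is_dist_def by (meson subsetD sum_nonneg)

lemma is_dist_sum_diff:
  "finite V \<Longrightarrow> is_dist V P \<Longrightarrow> A \<subseteq> V \<Longrightarrow> sum P (V - A) = 1 - sum P A"
  unfolding is_dist_def by (simp add: sum_diff)

lemma is_dist_sum_le_one: "finite V \<Longrightarrow> is_dist V P \<Longrightarrow> A \<subseteq> V \<Longrightarrow> sum P A \<le> 1"
  using is_dist_sum_diff[of V P A] is_dist_sum_nonneg[of V P "V - A"] by simp

lemma is_dist_nonempty: "is_dist V P \<Longrightarrow> V \<noteq> {}"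
  unfolding is_dist_def by auto

lemma dkl_le_KL:
  assumes "finite V" "is_dist V P" "is_dist V \<pi>" "A \<subseteq> V"
  shows "dkl (sum \<pi> A) (sum P A) \<le> KL V \<pi> P"
proof -
  have "finite A" using assms finite_subset by blast
  then have "xlogxy (sum \<pi> A) (sum P A) \<le> (\<Sum>x\<in>A. xlogxy (\<pi> x) (P x))"
    using assms by (intro xlogxy_sum_le) (auto simp: is_dist_def)
  moreover have "xlogxy (1 - sum \<pi> A) (1 - sum P A) \<le> (\<Sum>x\<in>V - A. xlogxy (\<pi> x) (P x))"
    using assms xlogxy_sum_le[of "V - A" \<pi> P] by (auto simp: is_dist_sum_diff is_dist_def)
  ultimately show ?thesis
    unfolding dkl_def KL_def sum.subset_diff[OF assms(4,1)] add.commute[of "sum _ (V - A)"]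
    by (rule add_mono)
qed

lemma KL_nonneg: "finite V \<Longrightarrow> is_dist V P \<Longrightarrow> is_dist V \<pi> \<Longrightarrow> 0 \<le> KL V \<pi> P"
  using dkl_le_KL[of V P \<pi> V] by (simp add: is_dist_def dkl_self)

lemma is_dist_Max_le_sum_or_sum_le_one_minus_Max:
  assumes "finite V" "is_dist V P" "A \<subseteq> V"
  shows "Max (P ` V) \<le> sum P A \<or> sum P A \<le> 1 - Max (P ` V)"
proof -
  obtain m where m: "m \<in> V" "Max (P ` V) = P m"
    using Max_in[of "P ` V"] assms is_dist_nonempty by fastforce
  have "finite A" using assms finite_subset by blast
  show ?thesis
  proof (cases "m \<in> A")
    case True
    then have "P m \<le> sum P A"
      using assms \<open>finite A\<close> by (intro member_le_sum) (auto simp: is_dist_def)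
    then show ?thesis using m by simp
  next
    case False
    then have "sum P A \<le> sum P (V - {m})"
      using assms by (intro sum_mono2) (auto simp: is_dist_def)
    then show ?thesis
      using m is_dist_sum_diff[of V P "{m}"] assms by simp
  qed
qed

lemma is_dist_Max_bounds:
  assumes "finite V" "is_dist V P"
  shows "0 \<le> Max (P ` V)" "Max (P ` V) \<le> 1"
proof -
  obtain m where m: "m \<in> V" "Max (P ` V) = P m"
    using Max_in[of "P ` V"] assms is_dist_nonempty by fastforce
  then show "0 \<le> Max (P ` V)" "Max (P ` V) \<le> 1"
    using assms is_dist_sum_nonneg[of V P "{m}"] is_dist_sum_le_one[of V P "{m}"] by simp_all
qed

lemma excess_mass_le_Sup_dkl:
  assumes "finite V" "is_dist V P" "is_dist V \<pi>" "A \<subseteq> V"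
  shows "sum \<pi> A - sum P A \<le>
    Sup {l. 0 \<le> l \<and> l \<le> 1 \<and> dkl l (1 - Max (P ` V)) \<le> KL V \<pi> P}"
    (is "_ \<le> Sup ?S")
proof -
  define q where "q = 1 - Max (P ` V)"
  have bdd: "bdd_above ?S" by (rule bdd_aboveI[of _ 1]) auto
  have "q \<in> ?S"
    using is_dist_Max_bounds[OF assms(1,2)] KL_nonneg[OF assms(1-3)] by (simp add: q_def dkl_self)
  then have q_le: "q \<le> Sup ?S" using bdd by (rule cSup_upper)
  have \<pi>A: "0 \<le> sum \<pi> A" "sum \<pi> A \<le> 1" and PA: "0 \<le> sum P A"
    using assms by (simp_all add: is_dist_sum_nonneg is_dist_sum_le_one)
  consider "sum \<pi> A - sum P A \<le> q" | "sum P A \<le> q" "q < sum \<pi> A"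
    using is_dist_Max_le_sum_or_sum_le_one_minus_Max[OF assms(1,2,4)] \<pi>A PA
    unfolding q_def by linarith
  then show ?thesis
  proof cases
    case 1
    then show ?thesis using q_le by simp
  next
    case 2
    then have "dkl (sum \<pi> A) q \<le> dkl (sum \<pi> A) (sum P A)"
      using PA \<pi>A by (intro dkl_antimono_right) auto
    also have "\<dots> \<le> KL V \<pi> P" using assms by (rule dkl_le_KL)
    finally have "sum \<pi> A \<in> ?S" using \<pi>A by (simp add: q_def)
    then have "sum \<pi> A \<le> Sup ?S" using bdd by (rule cSup_upper)
    then show ?thesis using PA by simp
  qed
qed

lemma dkl_le_small_right_imp_le:
  assumes "0 \<le> a" "a \<le> 1" "0 \<le> b" "b \<le> 1" "b < exp (- (C + 1) / \<epsilon>)" "0 < \<epsilon>"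
    and "dkl a b \<le> ereal C"
  shows "a \<le> \<epsilon>"
proof (rule ccontr)
  assume "\<not> a \<le> \<epsilon>"
  then have "\<epsilon> < a" by simp
  show False
  proof (cases "b = 0")
    case True
    then show False
      using assms \<open>\<epsilon> < a\<close> xlogxy_neq_minf[of "1 - a" 1] by (simp add: dkl_def xlogxy_zero_right)
  next
    case False
    then have "0 < b" using assms by simp
    have "ln b < - (C + 1) / \<epsilon>"
      using assms \<open>0 < b\<close> ln_less_cancel_iff[of b "exp (- (C + 1) / \<epsilon>)"] by simp
    then have "C + 1 < \<epsilon> * ln (1 / b)"
      using \<open>0 < b\<close> assms by (simp add: ln_div field_simps)
    also have "\<dots> \<le> a * ln (1 / b)"
      using \<open>\<epsilon> < a\<close> \<open>0 < b\<close> \<open>b \<le> 1\<close> by (intro mult_right_mono) simp_all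
    finally have "ereal C < ereal (a * ln (1 / b) - 1)" by simp
    also have "\<dots> \<le> dkl a b"
      using assms \<open>0 < b\<close> by (intro dkl_ge_mult_ln_inverse) auto
    finally show False using assms by simp
  qed
qed

lemma excess_mass_uniformly_small:
  assumes "finite V" "0 < \<epsilon>"
  shows "\<exists>\<eta>>0. \<forall>Q \<rho> A. is_dist V Q \<and> 1 - Max (Q ` V) < \<eta> \<and> is_dist V \<rho> \<and>
            KL V \<rho> Q \<le> ereal C \<and> A \<subseteq> V \<longrightarrow> sum \<rho> A - sum Q A \<le> \<epsilon>"
proof -
  define \<eta> where "\<eta> = min \<epsilon> (exp (- (C + 1) / \<epsilon>))"
  have \<eta>: "0 < \<eta>" "\<eta> \<le> \<epsilon>" "\<eta> \<le> exp (- (C + 1) / \<epsilon>)"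
    using assms by (simp_all add: \<eta>_def)
  have "sum \<rho> A - sum Q A \<le> \<epsilon>"
    if Q: "is_dist V Q" and q: "1 - Max (Q ` V) < \<eta>" and \<rho>: "is_dist V \<rho>"
      and KL: "KL V \<rho> Q \<le> ereal C" and A: "A \<subseteq> V" for Q \<rho> A
  proof -
    have \<rho>A: "0 \<le> sum \<rho> A" "sum \<rho> A \<le> 1" and QA: "0 \<le> sum Q A" "sum Q A \<le> 1"
      using assms(1) Q \<rho> A by (simp_all add: is_dist_sum_nonneg is_dist_sum_le_one)
    show ?thesis
      using is_dist_Max_le_sum_or_sum_le_one_minus_Max[OF assms(1) Q A]
    proof
      assume "Max (Q ` V) \<le> sum Q A"
      then show ?thesis using \<rho>A q \<eta> by linarith
    next
      assume "sum Q A \<le> 1 - Max (Q ` V)"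
      then have "sum Q A < exp (- (C + 1) / \<epsilon>)" using q \<eta> by linarith
      moreover have "dkl (sum \<rho> A) (sum Q A) \<le> ereal C"
        using dkl_le_KL[OF assms(1) Q \<rho> A] KL by (rule order_trans)
      ultimately have "sum \<rho> A \<le> \<epsilon>"
        by (rule dkl_le_small_right_imp_le[OF \<rho>A QA _ assms(2)])
      then show ?thesis using QA by simp
    qed
  qed
  then show ?thesis using \<open>0 < \<eta>\<close> by blast
qed

theorem theorem1:
  fixes V :: "'a set" and P \<pi> :: "'a \<Rightarrow> real"
  assumes "finite V"
    and "is_dist V P" and "is_dist V \<pi>"
  shows "(\<forall>A. A \<subseteq> V \<longrightarrow>
            sum \<pi> A - sum P A \<le>
              Sup {l. 0 \<le> l \<and> l \<le> 1 \<and>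
                     dkl l (1 - Max (P ` V)) \<le> KL V \<pi> P})
       \<and> (\<forall>C::real. C \<ge> 0 \<longrightarrow> (\<forall>\<epsilon>>0. \<exists>\<eta>>0. \<forall>Q \<rho> A.
            is_dist V Q \<and> 1 - Max (Q ` V) < \<eta> \<and> is_dist V \<rho> \<and>
            KL V \<rho> Q \<le> ereal C \<and> A \<subseteq> V \<longrightarrow>
            sum \<rho> A - sum Q A \<le> \<epsilon>))"
  using excess_mass_le_Sup_dkl[OF assms] excess_mass_uniformly_small[OF assms(1)] by blast

end
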